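(* Let $X$ be a complete CAT(0) space and $(T_n)_{n\in\mathbb{N}}$ a family of self-mappings of $X$, each satisfying property $(P_2)$, with $F:=\bigcap_{n\in\mathbb{N}} Fix(T_n)\neq\emptyset$. For $x\in X$ let $x_0:=x$ and $x_{n+1}:=T_nx_n$ for all $n$. Let $(\gamma_n)$ be a sequence of positive reals with $\sum_{n=0}^\infty\gamma_n^2=\infty$. Assume: (C1) for all $n,m\in\mathbb{N}$ and all $w\in X$, $d(T_nw,T_mw)\le \frac{|\gamma_n-\gamma_m|}{\gamma_n}d(w,T_nw)$; (C2) the sequence $\left(\frac{d(x_n,x_{n+1})}{\gamma_n}\right)_{n}$ is nonincreasing. Then for every $m\in\mathbb{N}$, $\lim_{n\to\infty} d(x_n,T_mx_n)=0$.
   Context: A geodesic space $(X,d)$ is CAT(0) if for all $z\in X$, all geodesics $\gamma:[a,b]\to X$ and all $t\in[0,1]$, $d^2(z,\gamma((1-t)a+tb))\le(1-t)d^2(z,\gamma(a))+td^2(z,\gamma(b))-t(1-t)d^2(\gamma(a),\gamma(b))$. A mapping $T:X\to X$ satisfies property $(P_2)$ if for all $x,y\in X$, $2d^2(Tx,Ty)\le d^2(x,Ty)+d^2(y,Tx)-d^2(x,Tx)-d^2(y,Ty)$. $Fix(T)$ is the fixed point set of $T$. *)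

theory Defs
  imports "HOL-Analysis.Analysis"
begin

definition geodesic_on :: "real \<Rightarrow> real \<Rightarrow> (real \<Rightarrow> 'a::metric_space) \<Rightarrow> bool" where
  "geodesic_on a b g \<longleftrightarrow> a \<le> b \<and> (\<forall>s\<in>{a..b}. \<forall>t\<in>{a..b}. dist (g s) (g t) = \<bar>s - t\<bar>)"

definition geodesic_space :: "'a::metric_space itself \<Rightarrow> bool" where
  "geodesic_space _ \<longleftrightarrow> (\<forall>x y::'a. \<exists>a b g. geodesic_on a b g \<and> g a = x \<and> g b = y)"

definition CAT0 :: "'a::metric_space itself \<Rightarrow> bool" where
  "CAT0 T \<longleftrightarrow> geodesic_space T \<and>
     (\<forall>(z::'a) a b (g::real \<Rightarrow> 'a) t. geodesic_on a b g \<and> 0 \<le> t \<and> t \<le> 1 \<longrightarrow>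
        (dist z (g ((1 - t) * a + t * b)))\<^sup>2 \<le>
          (1 - t) * (dist z (g a))\<^sup>2 + t * (dist z (g b))\<^sup>2 - t * (1 - t) * (dist (g a) (g b))\<^sup>2)"

definition property_P2 :: "('a::metric_space \<Rightarrow> 'a) \<Rightarrow> bool" where
  "property_P2 T \<longleftrightarrow> (\<forall>x y. 2 * (dist (T x) (T y))\<^sup>2 \<le>
     (dist x (T y))\<^sup>2 + (dist y (T x))\<^sup>2 - (dist x (T x))\<^sup>2 - (dist y (T y))\<^sup>2)"

definition Fix :: "('a \<Rightarrow> 'a) \<Rightarrow> 'a set" where
  "Fix T = {x. T x = x}"

end

theory Submission
  imports Defs
begin

text \<open>
  A point moved by a map with property (P2) loses at least the square of its step length in
  squared distance to any fixed point. Along the orbit, the squared steps d_n of the iteration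
  therefore telescope against the squared distance to a common fixed point and are summable.
  If the nonincreasing ratios d_n / \<gamma>_n stayed above some L > 0, then \<gamma>_n^2 \<le> d_n^2 / L^2 would be
  summable too; hence d_n / \<gamma>_n \<rightarrow> 0. Finally (C1) bounds d(x_n, T_m x_n) by
  2 d_n + \<gamma>_m d_n / \<gamma>_n.
\<close>

lemma property_P2_fixed_point_decrease:
  assumes "property_P2 S" and "S p = p"
  shows "(dist (S y) p)\<^sup>2 \<le> (dist y p)\<^sup>2 - (dist y (S y))\<^sup>2"
proof -
  have "2 * (dist (S y) (S p))\<^sup>2 \<le>
      (dist y (S p))\<^sup>2 + (dist p (S y))\<^sup>2 - (dist y (S y))\<^sup>2 - (dist p (S p))\<^sup>2"
    using assms(1) unfolding property_P2_def by blast
  then show ?thesis using assms(2) by (simp add: dist_commute)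
qed

lemma summable_of_telescoping_decrease:
  fixes f g :: "nat \<Rightarrow> real"
  assumes decrease: "\<And>n. g n + f (Suc n) \<le> f n"
    and "\<And>n. 0 \<le> g n" and "\<And>n. 0 \<le> f n"
  shows "summable g"
proof (rule summableI_nonneg_bounded)
  have partial: "(\<Sum>i<N. g i) \<le> f 0 - f N" for N
  proof (induction N)
    case (Suc N)
    then show ?case using decrease[of N] by simp
  qed simp
  show "(\<Sum>i<N. g i) \<le> f 0" for N
    using partial[of N] assms(3)[of N] by linarith
qed (use assms(2) in simp)

lemma tendsto_zero_of_summable_square:
  fixes d :: "nat \<Rightarrow> real"
  assumes "summable (\<lambda>n. (d n)\<^sup>2)" and "\<And>n. 0 \<le> d n"
  shows "d \<longlonglongrightarrow> 0"
proof -
  have "(\<lambda>n. sqrt ((d n)\<^sup>2)) \<longlonglongrightarrow> sqrt 0"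
    using summable_LIMSEQ_zero[OF assms(1)] by (rule tendsto_real_sqrt)
  then show ?thesis using assms(2) by simp
qed

lemma decseq_ratio_tendsto_zero:
  fixes d \<gamma> :: "nat \<Rightarrow> real"
  assumes dec: "decseq (\<lambda>n. d n / \<gamma> n)"
    and \<gamma>_pos: "\<And>n. 0 < \<gamma> n" and d_nonneg: "\<And>n. 0 \<le> d n"
    and d_summable: "summable (\<lambda>n. (d n)\<^sup>2)"
    and \<gamma>_not_summable: "\<not> summable (\<lambda>n. (\<gamma> n)\<^sup>2)"
  shows "(\<lambda>n. d n / \<gamma> n) \<longlonglongrightarrow> 0"
proof -
  have ratio_nonneg: "\<forall>n. 0 \<le> d n / \<gamma> n"
    using \<gamma>_pos d_nonneg by (simp add: less_imp_le)
  obtain L where lim: "(\<lambda>n. d n / \<gamma> n) \<longlonglongrightarrow> L" and below: "\<And>n. L \<le> d n / \<gamma> n"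
    using decseq_convergent[OF dec ratio_nonneg] by blast
  have "L \<le> 0"
  proof (rule ccontr)
    assume "\<not> L \<le> 0"
    then have L_pos: "0 < L" by simp
    have "norm ((\<gamma> n)\<^sup>2) \<le> (d n)\<^sup>2 / L\<^sup>2" for n
    proof -
      have "L * \<gamma> n \<le> d n"
        using below[of n] \<gamma>_pos[of n] by (simp add: pos_le_divide_eq)
      then have "(L * \<gamma> n)\<^sup>2 \<le> (d n)\<^sup>2"
        using L_pos \<gamma>_pos[of n] by (intro power_mono) auto
      then show ?thesis using L_pos by (simp add: field_simps power_mult_distrib)
    qed
    then have "summable (\<lambda>n. (\<gamma> n)\<^sup>2)"
      by (intro summable_comparison_test'[OF summable_divide[OF d_summable, of "L\<^sup>2"], of 0])
    with \<gamma>_not_summable show False ..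
  qed
  moreover have "0 \<le> L"
    using LIMSEQ_le_const[OF lim, of 0] ratio_nonneg by blast
  ultimately show ?thesis using lim by simp
qed

lemma dist_le_of_relative_closeness:
  fixes w y z :: "'a::metric_space"
  assumes close: "dist y z \<le> \<bar>a - b\<bar> / a * dist w y"
    and "0 < a" and "0 \<le> b"
  shows "dist w z \<le> 2 * dist w y + b * (dist w y / a)"
proof -
  have "dist w z \<le> dist w y + dist y z"
    by (rule dist_triangle)
  also have "\<dots> \<le> dist w y + (a + b) / a * dist w y"
    using close assms(2,3) by (smt (verit) divide_right_mono mult_right_mono zero_le_dist)
  also have "\<dots> = 2 * dist w y + b * (dist w y / a)"
    using assms(2) by (simp add: field_simps)
  finally show ?thesis .
qed

theorem proposition3p4:
  fixes T :: "nat \<Rightarrow> 'a::metric_space \<Rightarrow> 'a"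
    and x :: 'a and xs :: "nat \<Rightarrow> 'a" and \<gamma> :: "nat \<Rightarrow> real"
  assumes "CAT0 TYPE('a)"
    and "complete (UNIV :: 'a set)"
    and "\<And>n. property_P2 (T n)"
    and "(\<Inter>n. Fix (T n)) \<noteq> {}"
    and "xs 0 = x"
    and "\<And>n. xs (Suc n) = T n (xs n)"
    and "\<And>n. \<gamma> n > 0"
    and "\<not> summable (\<lambda>n. (\<gamma> n)\<^sup>2)"
    and C1: "\<And>n m w. dist (T n w) (T m w) \<le> \<bar>\<gamma> n - \<gamma> m\<bar> / \<gamma> n * dist w (T n w)"
    and C2: "decseq (\<lambda>n. dist (xs n) (xs (Suc n)) / \<gamma> n)"
  shows "\<forall>m. (\<lambda>n. dist (xs n) (T m (xs n))) \<longlonglongrightarrow> 0"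
proof
  fix m
  define d where "d n = dist (xs n) (xs (Suc n))" for n
  obtain p where p: "\<And>n. T n p = p" using assms(4) unfolding Fix_def by auto
  have "summable (\<lambda>n. (d n)\<^sup>2)"
  proof (rule summable_of_telescoping_decrease[where f = "\<lambda>n. (dist (xs n) p)\<^sup>2"])
    show "(d n)\<^sup>2 + (dist (xs (Suc n)) p)\<^sup>2 \<le> (dist (xs n) p)\<^sup>2" for n
      using property_P2_fixed_point_decrease[OF assms(3) p, of n "xs n"] assms(6)[of n]
      by (simp add: d_def)
  qed auto
  then have "d \<longlonglongrightarrow> 0" and "(\<lambda>n. d n / \<gamma> n) \<longlonglongrightarrow> 0"
    using tendsto_zero_of_summable_square decseq_ratio_tendsto_zero[OF C2[folded d_def]]
      assms(7,8) by (auto simp: d_def)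
  then have bound_lim: "(\<lambda>n. 2 * d n + \<gamma> m * (d n / \<gamma> n)) \<longlonglongrightarrow> 0"
    using tendsto_add[OF tendsto_mult_right_zero[of d sequentially 2]
        tendsto_mult_right_zero[of "\<lambda>n. d n / \<gamma> n" sequentially "\<gamma> m"]]
    by simp
  have "dist (xs n) (T m (xs n)) \<le> 2 * d n + \<gamma> m * (d n / \<gamma> n)" for n
    using dist_le_of_relative_closeness[OF C1[where n = n and m = m and w = "xs n"]
        assms(7) less_imp_le[OF assms(7)]] assms(6)
    by (simp add: d_def)
  then show "(\<lambda>n. dist (xs n) (T m (xs n))) \<longlonglongrightarrow> 0"
    by (intro tendsto_sandwich[OF _ _ tendsto_const bound_lim]) auto
qed

end
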